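(* Let $(s_i)_{i\in\mathbb{Z}}$ and $(t_j)_{j\in\mathbb{Z}}$ be strictly increasing bi-infinite real sequences, unbounded above and below, and let $F:\mathbb{R}^2\to\mathbb{R}^d$ have the BMSDD property with constant $L$ in each rectangle $[s_i,s_{i+1}]\times[t_j,t_{j+1}]$, $i,j\in\mathbb{Z}$. Then $F$ has the BMSDD property with constant $L$ in $\mathbb{R}^2$.
   Context: For $\sigma_1\ne\sigma_2$, $\tau_1\ne\tau_2$, $[\sigma_1,\sigma_2;\tau_1,\tau_2]F=\frac{F(\sigma_1,\tau_1)+F(\sigma_2,\tau_2)-F(\sigma_2,\tau_1)-F(\sigma_1,\tau_2)}{(\sigma_1-\sigma_2)(\tau_1-\tau_2)}$. $F$ has the BMSDD property with constant $L$ in $\Omega\subset\mathbb{R}^2$ if $\|[\sigma_1,\sigma_2;\tau_1,\tau_2]F\|_\infty\le L$ for all $\sigma_1\ne\sigma_2$, $\tau_1\ne\tau_2$ with $(\sigma_i,\tau_j)\in\Omega$ for all $i,j\in\{1,2\}$. *)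

theory Defs
  imports "HOL-Analysis.Analysis"
begin

definition mdd :: "(real \<times> real \<Rightarrow> real ^ 'd) \<Rightarrow> real \<Rightarrow> real \<Rightarrow> real \<Rightarrow> real \<Rightarrow> real ^ 'd" where
  "mdd F \<sigma>1 \<sigma>2 \<tau>1 \<tau>2 =
     (F (\<sigma>1, \<tau>1) + F (\<sigma>2, \<tau>2) - F (\<sigma>2, \<tau>1) - F (\<sigma>1, \<tau>2)) /\<^sub>R ((\<sigma>1 - \<sigma>2) * (\<tau>1 - \<tau>2))"

definition bmsdd :: "(real \<times> real \<Rightarrow> real ^ 'd) \<Rightarrow> real \<Rightarrow> (real \<times> real) set \<Rightarrow> bool" where
  "bmsdd F L \<Omega> \<longleftrightarrow>
     (\<forall>\<sigma>1 \<sigma>2 \<tau>1 \<tau>2. \<sigma>1 \<noteq> \<sigma>2 \<and> \<tau>1 \<noteq> \<tau>2 \<and>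
        (\<sigma>1, \<tau>1) \<in> \<Omega> \<and> (\<sigma>1, \<tau>2) \<in> \<Omega> \<and> (\<sigma>2, \<tau>1) \<in> \<Omega> \<and> (\<sigma>2, \<tau>2) \<in> \<Omega> \<longrightarrow>
        infnorm (mdd F \<sigma>1 \<sigma>2 \<tau>1 \<tau>2) \<le> L)"

end

theory Submission
  imports Defs
begin

text \<open>The mixed second difference of F over a rectangle is additive under subdivision of either
  side, so a bound proportional to the area of the rectangle passes from the cells of a partition of
  one side to arbitrary intervals: split along the partition points and apply the triangle
  inequality. Gluing in the first coordinate turns the grid cells into horizontal strips; gluing in
  the second coordinate, which is the first one for the transposed function, turns the strips into
  the plane.\<close>

lemma partition_cells_induct:
  fixes s :: "int \<Rightarrow> 'a::linorder"
  assumes "mono s" and "\<forall>x. \<exists>i. s i > x" and "\<forall>x. \<exists>i. s i < x" and "a \<le> b"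
    and cell: "\<And>i a b. s i \<le> a \<Longrightarrow> a \<le> b \<Longrightarrow> b \<le> s (i + 1) \<Longrightarrow> Q a b"
    and trans: "\<And>a b c. a \<le> b \<Longrightarrow> b \<le> c \<Longrightarrow> Q a b \<Longrightarrow> Q b c \<Longrightarrow> Q a c"
  shows "Q a b"
proof -
  obtain i k where "s i < a" "b < s k"
    using assms(2,3) by blast
  have "i \<le> k"
    using \<open>s i < a\<close> \<open>b < s k\<close> \<open>a \<le> b\<close> monoD[OF \<open>mono s\<close>, of k i] by force
  have "\<forall>a b. s i \<le> a \<longrightarrow> a \<le> b \<longrightarrow> b \<le> s k \<longrightarrow> Q a b"
    using \<open>i \<le> k\<close>
  proof (induction k rule: int_ge_induct)
    case base
    show ?case
      using cell[of i] monoD[OF \<open>mono s\<close>, of i "i + 1"] by fastforce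
  next
    case (step k)
    show ?case
    proof (intro allI impI)
      fix a b assume "s i \<le> a" "a \<le> b" "b \<le> s (k + 1)"
      consider "b \<le> s k" | "s k \<le> a" | "a < s k" "s k < b"
        by fastforce
      then show "Q a b"
      proof cases
        case 3
        then show ?thesis
          using step.IH cell[of k "s k" b] trans[of a "s k" b] \<open>s i \<le> a\<close> \<open>b \<le> s (k + 1)\<close>
          by simp
      qed (use step.IH cell \<open>s i \<le> a\<close> \<open>a \<le> b\<close> \<open>b \<le> s (k + 1)\<close> in auto)
    qed
  qed
  then show ?thesis
    using \<open>s i < a\<close> \<open>b < s k\<close> \<open>a \<le> b\<close> by simp
qed

definition mixed_diff :: "(real \<times> real \<Rightarrow> real ^ 'd) \<Rightarrow> real \<Rightarrow> real \<Rightarrow> real \<Rightarrow> real \<Rightarrow> real ^ 'd" where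
  "mixed_diff F a b c d = F (a, c) + F (b, d) - F (b, c) - F (a, d)"

lemma mixed_diff_split_fst: "mixed_diff F a c x y = mixed_diff F a b x y + mixed_diff F b c x y"
  by (simp add: mixed_diff_def algebra_simps)

lemma mixed_diff_swap_fst: "mixed_diff F b a x y = - mixed_diff F a b x y"
  by (simp add: mixed_diff_def algebra_simps)

lemma infnorm_mixed_diff_commute_fst:
  "infnorm (mixed_diff F b a x y) = infnorm (mixed_diff F a b x y)"
  by (metis mixed_diff_swap_fst infnorm_neg)

lemma mixed_diff_same_fst: "mixed_diff F a a x y = 0"
  by (simp add: mixed_diff_def)

lemma mixed_diff_same_snd: "mixed_diff F a b x x = 0"
  by (simp add: mixed_diff_def)

lemma infnorm_mdd:
  "infnorm (mdd F a b c d) = infnorm (mixed_diff F a b c d) / (\<bar>a - b\<bar> * \<bar>c - d\<bar>)"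
  by (simp add: mdd_def mixed_diff_def infnorm_mul divide_inverse_commute abs_mult)

lemma bmsdd_iff_mixed_diff:
  "bmsdd F L \<Omega> \<longleftrightarrow>
     (\<forall>a b c d. (a, c) \<in> \<Omega> \<and> (a, d) \<in> \<Omega> \<and> (b, c) \<in> \<Omega> \<and> (b, d) \<in> \<Omega> \<longrightarrow>
        infnorm (mixed_diff F a b c d) \<le> L * \<bar>a - b\<bar> * \<bar>c - d\<bar>)"
proof -
  have "infnorm (mdd F a b c d) \<le> L \<longleftrightarrow> infnorm (mixed_diff F a b c d) \<le> L * \<bar>a - b\<bar> * \<bar>c - d\<bar>"
    if "a \<noteq> b" "c \<noteq> d" for a b c d
    using that by (simp add: infnorm_mdd pos_divide_le_eq mult.assoc)
  moreover have "infnorm (mixed_diff F a b c d) \<le> L * \<bar>a - b\<bar> * \<bar>c - d\<bar>"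
    if "a = b \<or> c = d" for a b c d
    using that by (auto simp: mixed_diff_same_fst mixed_diff_same_snd infnorm_0)
  ultimately show ?thesis
    unfolding bmsdd_def by metis
qed

lemma bmsdd_Times_iff:
  "bmsdd F L (A \<times> B) \<longleftrightarrow>
     (\<forall>a\<in>A. \<forall>b\<in>A. \<forall>c\<in>B. \<forall>d\<in>B. infnorm (mixed_diff F a b c d) \<le> L * \<bar>a - b\<bar> * \<bar>c - d\<bar>)"
  by (auto simp: bmsdd_iff_mixed_diff)

lemma bmsdd_swap: "bmsdd (F \<circ> prod.swap) L (prod.swap ` \<Omega>) \<longleftrightarrow> bmsdd F L \<Omega>"
proof -
  have mdd_swap: "mdd (F \<circ> prod.swap) c d a b = mdd F a b c d" for a b c d
    by (simp add: mdd_def algebra_simps)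
  have swap_mem: "(x, y) \<in> prod.swap ` \<Omega> \<longleftrightarrow> (y, x) \<in> \<Omega>" for x y
    by force
  show ?thesis
    unfolding bmsdd_def swap_mem mdd_swap by blast
qed

lemma bmsdd_glue_fst:
  fixes s :: "int \<Rightarrow> real"
  assumes "mono s" and "\<forall>x. \<exists>i. s i > x" and "\<forall>x. \<exists>i. s i < x"
    and cells: "\<And>i. bmsdd F L ({s i .. s (i + 1)} \<times> B)"
  shows "bmsdd F L (UNIV \<times> B)"
proof -
  have "infnorm (mixed_diff F a b c d) \<le> L * \<bar>a - b\<bar> * \<bar>c - d\<bar>" if "c \<in> B" "d \<in> B" for a b c d
  proof (induction a b rule: linorder_wlog)
    case (le a b)
    show ?case
      using assms(1-3) \<open>a \<le> b\<close>
    proof (rule partition_cells_induct)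
      fix i x y assume "s i \<le> x" "x \<le> y" "y \<le> s (i + 1)"
      then have "x \<in> {s i .. s (i + 1)}" "y \<in> {s i .. s (i + 1)}"
        by auto
      then show "infnorm (mixed_diff F x y c d) \<le> L * \<bar>x - y\<bar> * \<bar>c - d\<bar>"
        using cells[of i] \<open>c \<in> B\<close> \<open>d \<in> B\<close> unfolding bmsdd_Times_iff by blast
    next
      fix x y z
      assume "x \<le> y" "y \<le> z"
        and "infnorm (mixed_diff F x y c d) \<le> L * \<bar>x - y\<bar> * \<bar>c - d\<bar>"
        and "infnorm (mixed_diff F y z c d) \<le> L * \<bar>y - z\<bar> * \<bar>c - d\<bar>"
      then have "infnorm (mixed_diff F x z c d) \<le> L * \<bar>x - y\<bar> * \<bar>c - d\<bar> + L * \<bar>y - z\<bar> * \<bar>c - d\<bar>"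
        using infnorm_triangle[of "mixed_diff F x y c d" "mixed_diff F y z c d"]
        by (simp add: mixed_diff_split_fst[of F x z c d y])
      also have "\<dots> = L * \<bar>x - z\<bar> * \<bar>c - d\<bar>"
        using \<open>x \<le> y\<close> \<open>y \<le> z\<close> by (simp add: algebra_simps)
      finally show "infnorm (mixed_diff F x z c d) \<le> L * \<bar>x - z\<bar> * \<bar>c - d\<bar>" .
    qed
  next
    case (sym a b)
    then show ?case
      by (metis infnorm_mixed_diff_commute_fst abs_minus_commute)
  qed
  then show ?thesis
    by (simp add: bmsdd_Times_iff)
qed

lemma bmsdd_glue_snd:
  fixes t :: "int \<Rightarrow> real"
  assumes "mono t" and "\<forall>x. \<exists>j. t j > x" and "\<forall>x. \<exists>j. t j < x"
    and "\<And>j. bmsdd F L (A \<times> {t j .. t (j + 1)})"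
  shows "bmsdd F L (A \<times> UNIV)"
proof -
  have "bmsdd (F \<circ> prod.swap) L ({t j .. t (j + 1)} \<times> A)" for j
    using assms(4)[of j] bmsdd_swap[of F L "A \<times> {t j .. t (j + 1)}"] by (simp only: product_swap)
  then have "bmsdd (F \<circ> prod.swap) L (UNIV \<times> A)"
    by (rule bmsdd_glue_fst[OF assms(1-3)])
  then show ?thesis
    using bmsdd_swap[of F L "A \<times> UNIV"] by (simp only: product_swap)
qed

theorem lemma5:
  fixes s t :: "int \<Rightarrow> real" and F :: "real \<times> real \<Rightarrow> real ^ 'd" and L :: real
  assumes "strict_mono s" and "strict_mono t"
    and "\<forall>x. \<exists>i. s i > x" and "\<forall>x. \<exists>i. s i < x"
    and "\<forall>x. \<exists>j. t j > x" and "\<forall>x. \<exists>j. t j < x"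
    and "\<forall>i j. bmsdd F L ({s i .. s (i + 1)} \<times> {t j .. t (j + 1)})"
  shows "bmsdd F L UNIV"
proof -
  have "bmsdd F L (UNIV \<times> {t j .. t (j + 1)})" for j
    using bmsdd_glue_fst[OF strict_mono_mono[OF assms(1)] assms(3,4)] assms(7) by blast
  then have "bmsdd F L (UNIV \<times> UNIV)"
    using bmsdd_glue_snd[OF strict_mono_mono[OF assms(2)] assms(5,6)] by blast
  then show ?thesis
    by simp
qed

end
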